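(* For all integers $n\geq 2$ and $m\geq 1$, $\mathrm{mbt}(K_{2n+1}\Box C_{2m+1})=\Delta(K_{2n+1}\Box C_{2m+1})+1=2n+3$.
   Context: A book embedding of a graph $G$ consists of a linear ordering of $V(G)$ (the vertices placed on the spine) together with an assignment of each edge to one of a set of pages such that no two edges on the same page cross, i.e. there are no two edges $uv$, $xy$ on the same page with $u<x<v<y$ in the ordering. A book embedding is matching if on every page each vertex is incident with at most one edge of that page. The matching book thickness $\mathrm{mbt}(G)$ is the minimum number of pages over all matching book embeddings of $G$. $\Delta(G)$ denotes the maximum degree of $G$. $K_r$ is the complete graph on $r$ vertices, $C_s$ the cycle on $s$ vertices. The Cartesian product $G\Box B$ has vertex set $V(G)\times V(B)$, with $(u_1,v_1)$ adjacent to $(u_2,v_2)$ iff either $u_1=u_2$ and $v_1v_2\in E(B)$, or $v_1=v_2$ and $u_1u_2\in E(G)$. *)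

theory Defs
  imports Main
begin

type_synonym 'a graph = "'a set \<times> 'a set set"

definition verts :: "'a graph \<Rightarrow> 'a set" where "verts G = fst G"
definition edges :: "'a graph \<Rightarrow> 'a set set" where "edges G = snd G"

definition complete_graph :: "nat \<Rightarrow> nat graph" where
  "complete_graph r = ({0..<r}, {{i, j} | i j. i < r \<and> j < r \<and> i \<noteq> j})"

text \<open>Cycle C_s on vertices 0..s-1 (meaningful for s >= 3).\<close>
definition cycle_graph :: "nat \<Rightarrow> nat graph" where
  "cycle_graph s = ({0..<s}, {{i, (i + 1) mod s} | i. i < s})"

definition cart_prod :: "'a graph \<Rightarrow> 'b graph \<Rightarrow> ('a \<times> 'b) graph" (infixr "\<box>" 80) where
  "cart_prod G B = (verts G \<times> verts B,
     {{(u, v1), (u, v2)} | u v1 v2. u \<in> verts G \<and> {v1, v2} \<in> edges B}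
     \<union> {{(u1, v), (u2, v)} | u1 u2 v. {u1, u2} \<in> edges G \<and> v \<in> verts B})"

definition degree :: "'a graph \<Rightarrow> 'a \<Rightarrow> nat" where
  "degree G v = card {e \<in> edges G. v \<in> e}"

definition max_degree :: "'a graph \<Rightarrow> nat" where
  "max_degree G = Max (degree G ` verts G)"

definition crossing :: "('a \<Rightarrow> nat) \<Rightarrow> 'a set \<Rightarrow> 'a set \<Rightarrow> bool" where
  "crossing pos e f \<longleftrightarrow> (\<exists>u v x y. e = {u, v} \<and> f = {x, y} \<and>
      pos u < pos x \<and> pos x < pos v \<and> pos v < pos y)"

definition matching_book_embedding ::
    "'a graph \<Rightarrow> nat \<Rightarrow> ('a \<Rightarrow> nat) \<Rightarrow> ('a set \<Rightarrow> nat) \<Rightarrow> bool" where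
  "matching_book_embedding G k pos page \<longleftrightarrow>
     inj_on pos (verts G) \<and>
     (\<forall>e \<in> edges G. page e < k) \<and>
     (\<forall>e \<in> edges G. \<forall>f \<in> edges G. page e = page f \<longrightarrow> \<not> crossing pos e f) \<and>
     (\<forall>e \<in> edges G. \<forall>f \<in> edges G. page e = page f \<longrightarrow> e \<noteq> f \<longrightarrow> e \<inter> f = {})"

definition mbt :: "'a graph \<Rightarrow> nat" where
  "mbt G = (LEAST k. \<exists>pos page. matching_book_embedding G k pos page)"

end

theory Submission
  imports Defs
begin

text \<open>A page of a matching book embedding is a matching, so on N vertices, N odd, it
  holds at most (N - 1)/2 edges; a d-regular graph has dN/2 edges and thus needs at
  least d + 1 pages. The graph K_{2n+1} \<box> C_{2m+1} is (2n + 2)-regular on an odd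
  number of vertices.

  For the matching upper bound, the 2m + 1 copies of K_{2n+1} (layers) are placed one
  after another on the spine. Within a layer the chords {a, b} are paged by a + b modulo
  2n + 1, the classes being non-crossing matchings. The edges between two consecutive
  layers are nested and share one of two extra pages, chosen by parity. The 2n + 1
  edges closing the cycles span almost the whole spine and pairwise cross, so they take
  2n + 1 distinct pages; the chords of the two end layers are regrouped modulo 2n + 2 so
  that each of these pages still carries a matching.\<close>

section \<open>Regular graphs of odd order\<close>

definition simple_graph :: "'a graph \<Rightarrow> bool" where
  "simple_graph G \<longleftrightarrow> finite (verts G) \<and> (\<forall>e \<in> edges G. e \<subseteq> verts G \<and> card e = 2)"

definition regular :: "'a graph \<Rightarrow> nat \<Rightarrow> bool" where
  "regular G d \<longleftrightarrow> (\<forall>v \<in> verts G. degree G v = d)"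

lemma simple_graph_finite_edges:
  assumes "simple_graph G" shows "finite (edges G)"
proof -
  have "edges G \<subseteq> Pow (verts G)" using assms unfolding simple_graph_def by auto
  then show ?thesis using assms unfolding simple_graph_def by (meson finite_Pow_iff finite_subset)
qed

lemma sum_degree_eq_twice_card_edges:
  assumes "simple_graph G"
  shows "(\<Sum>v \<in> verts G. degree G v) = 2 * card (edges G)"
proof -
  have fin: "finite (verts G)" "finite (edges G)"
    using assms simple_graph_finite_edges[OF assms] unfolding simple_graph_def by auto
  have "(\<Sum>v \<in> verts G. degree G v) = (\<Sum>v \<in> verts G. \<Sum>e \<in> edges G. if v \<in> e then 1 else 0)"
    unfolding degree_def by (intro sum.cong refl) (simp add: sum.inter_filter[symmetric] fin)
  also have "\<dots> = (\<Sum>e \<in> edges G. \<Sum>v \<in> verts G. if v \<in> e then 1 else 0)"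
    by (rule sum.swap)
  also have "\<dots> = (\<Sum>e \<in> edges G. card e)"
  proof (rule sum.cong)
    fix e assume "e \<in> edges G"
    then have "{v \<in> verts G. v \<in> e} = e" using assms unfolding simple_graph_def by auto
    then show "(\<Sum>v \<in> verts G. if v \<in> e then 1 else 0) = card e"
      using fin by (simp add: sum.inter_filter[symmetric])
  qed simp
  also have "\<dots> = 2 * card (edges G)" using assms unfolding simple_graph_def by simp
  finally show ?thesis .
qed

lemma max_degree_regular:
  assumes "regular G d" "verts G \<noteq> {}"
  shows "max_degree G = d"
proof -
  have "degree G ` verts G = {d}" using assms unfolding regular_def by auto
  then show ?thesis unfolding max_degree_def by simp
qed

lemma card_page_le:
  assumes "simple_graph G" "matching_book_embedding G k pos page"
  shows "2 * card {e \<in> edges G. page e = p} \<le> card (verts G)"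
proof -
  let ?P = "{e \<in> edges G. page e = p}"
  have edge: "e \<subseteq> verts G" "card e = 2" if "e \<in> ?P" for e
    using that assms(1) unfolding simple_graph_def by auto
  have fin: "finite (verts G)" using assms(1) unfolding simple_graph_def by simp
  have "pairwise disjnt ?P"
    using assms(2) unfolding matching_book_embedding_def pairwise_def disjnt_def by auto
  then have "card (\<Union>?P) = sum card ?P"
    by (rule card_Union_disjoint) (use edge fin in \<open>auto intro: finite_subset\<close>)
  also have "\<dots> = 2 * card ?P" using edge by simp
  finally have "card (\<Union>?P) = 2 * card ?P" .
  moreover have "card (\<Union>?P) \<le> card (verts G)" using edge fin by (intro card_mono) auto
  ultimately show ?thesis by simp
qed

lemma card_edges_le_pages:
  assumes "simple_graph G" "matching_book_embedding G k pos page"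
  shows "card (edges G) \<le> k * (card (verts G) div 2)"
proof -
  have "edges G = (\<Union>p<k. {e \<in> edges G. page e = p})"
    using assms(2) unfolding matching_book_embedding_def by auto
  then have "card (edges G) \<le> (\<Sum>p<k. card {e \<in> edges G. page e = p})"
    by (metis card_UN_le finite_lessThan)
  also have "\<dots> \<le> (\<Sum>p<k. card (verts G) div 2)"
    using card_page_le[OF assms] by (intro sum_mono) (metis div_le_mono div_mult_self1_is_m zero_less_numeral)
  finally show ?thesis by simp
qed

lemma pages_gt_degree_if_regular_odd:
  assumes "simple_graph G" "regular G d" "0 < d" "odd (card (verts G))"
    and "matching_book_embedding G k pos page"
  shows "d < k"
proof (rule ccontr)
  assume "\<not> d < k"
  obtain h where h: "card (verts G) = 2 * h + 1" using assms(4) oddE by blast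
  have "2 * card (edges G) = (2 * h + 1) * d"
    using sum_degree_eq_twice_card_edges[OF assms(1)] assms(2) h unfolding regular_def by simp
  moreover have "card (edges G) \<le> k * h"
    using card_edges_le_pages[OF assms(1,5)] h by simp
  ultimately have "(2 * h + 1) * d \<le> 2 * (k * h)" by linarith
  moreover have "2 * (k * h) \<le> 2 * (d * h)" using \<open>\<not> d < k\<close> by simp
  moreover have "(2 * h + 1) * d = 2 * (d * h) + d" by (simp add: algebra_simps)
  ultimately show False using assms(3) by linarith
qed

lemma mbt_eq_regular_odd:
  assumes "simple_graph G" "regular G d" "0 < d" "odd (card (verts G))"
    and "matching_book_embedding G (d + 1) pos page"
  shows "mbt G = d + 1"
  unfolding mbt_def
proof (rule Least_equality)
  show "\<exists>pos page. matching_book_embedding G (d + 1) pos page" using assms(5) by blast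
  show "d + 1 \<le> k" if "\<exists>pos page. matching_book_embedding G k pos page" for k
    using that pages_gt_degree_if_regular_odd[OF assms(1-4)] by (metis Suc_eq_plus1 Suc_leI)
qed

section \<open>Cartesian products, complete graphs and cycles\<close>

lemma verts_cart_prod [simp]: "verts (G \<box> B) = verts G \<times> verts B"
  unfolding cart_prod_def verts_def by simp

lemma edges_cart_prodE:
  assumes "e \<in> edges (G \<box> B)"
  obtains (fibre) u f where "u \<in> verts G" "f \<in> edges B" "e = Pair u ` f"
    | (layer) f v where "f \<in> edges G" "v \<in> verts B" "e = (\<lambda>x. (x, v)) ` f"
  using assms unfolding cart_prod_def by (fastforce simp: verts_def edges_def)

lemma incident_edges_cart_prod:
  assumes "simple_graph G" "simple_graph B" "u \<in> verts G" "v \<in> verts B"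
  shows "{e \<in> edges (G \<box> B). (u, v) \<in> e}
       = image (Pair u) ` {f \<in> edges B. v \<in> f} \<union> image (\<lambda>x. (x, v)) ` {f \<in> edges G. u \<in> f}"
proof
  show "{e \<in> edges (G \<box> B). (u, v) \<in> e}
       \<subseteq> image (Pair u) ` {f \<in> edges B. v \<in> f} \<union> image (\<lambda>x. (x, v)) ` {f \<in> edges G. u \<in> f}"
    by (auto elim!: edges_cart_prodE)
next
  have doubleton: "\<exists>x y. f = {x, y}" if "simple_graph H" "f \<in> edges H" for H :: "'c graph" and f
    using that unfolding simple_graph_def by (metis card_2_iff)
  show "image (Pair u) ` {f \<in> edges B. v \<in> f} \<union> image (\<lambda>x. (x, v)) ` {f \<in> edges G. u \<in> f}
       \<subseteq> {e \<in> edges (G \<box> B). (u, v) \<in> e}"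
    using assms doubleton[OF assms(1)] doubleton[OF assms(2)]
    unfolding cart_prod_def edges_def[of "(_, _)"] by (fastforce simp: verts_def)
qed

lemma simple_graph_cart_prod:
  assumes "simple_graph G" "simple_graph B"
  shows "simple_graph (G \<box> B)"
proof -
  have "e \<subseteq> verts (G \<box> B) \<and> card e = 2" if "e \<in> edges (G \<box> B)" for e
    using that
  proof (cases rule: edges_cart_prodE)
    case (fibre u f)
    then show ?thesis using assms(2) unfolding simple_graph_def by (auto simp: card_image inj_on_def)
  next
    case (layer f v)
    then show ?thesis using assms(1) unfolding simple_graph_def by (auto simp: card_image inj_on_def)
  qed
  then show ?thesis using assms unfolding simple_graph_def by simp
qed

lemma degree_cart_prod:
  assumes "simple_graph G" "simple_graph B" "u \<in> verts G" "v \<in> verts B"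
  shows "degree (G \<box> B) (u, v) = degree B v + degree G u"
proof -
  let ?F = "image (Pair u) ` {f \<in> edges B. v \<in> f}"
  let ?L = "image (\<lambda>x. (x, v)) ` {f \<in> edges G. u \<in> f}"
  have "card ?F = degree B v"
    unfolding degree_def by (rule card_image) (auto intro: inj_on_image inj_onI)
  moreover have "card ?L = degree G u"
    unfolding degree_def by (rule card_image) (auto intro: inj_on_image inj_onI)
  moreover have "?F \<inter> ?L = {}"
  proof (rule Int_emptyI)
    fix e assume "e \<in> ?F" "e \<in> ?L"
    then have "card e = 2" "e \<subseteq> {(u, v)}"
      using assms(2) unfolding simple_graph_def by (auto simp: card_image inj_on_def)
    then show False using card_mono[of "{(u, v)}" e] by simp
  qed
  moreover have "finite ?F" "finite ?L"
    using simple_graph_finite_edges[OF assms(1)] simple_graph_finite_edges[OF assms(2)] by auto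
  ultimately show ?thesis
    unfolding degree_def incident_edges_cart_prod[OF assms] by (simp add: card_Un_disjoint)
qed

lemma regular_cart_prod:
  assumes "simple_graph G" "simple_graph B" "regular G d" "regular B d'"
  shows "regular (G \<box> B) (d' + d)"
  using assms degree_cart_prod unfolding regular_def by fastforce

lemma verts_complete_graph [simp]: "verts (complete_graph r) = {0..<r}"
  unfolding complete_graph_def verts_def by simp

lemma edges_complete_graph: "edges (complete_graph r) = {{i, j} | i j. i < r \<and> j < r \<and> i \<noteq> j}"
  unfolding complete_graph_def edges_def by simp

lemma verts_cycle_graph [simp]: "verts (cycle_graph s) = {0..<s}"
  unfolding cycle_graph_def verts_def by simp

lemma edges_cycle_graph: "edges (cycle_graph s) = {{i, Suc i mod s} | i. i < s}"
  unfolding cycle_graph_def edges_def by simp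

lemma simple_graph_complete_graph: "simple_graph (complete_graph r)"
  unfolding simple_graph_def edges_complete_graph by auto

lemma simple_graph_cycle_graph:
  assumes "2 \<le> s" shows "simple_graph (cycle_graph s)"
  unfolding simple_graph_def edges_cycle_graph using assms by (auto simp: mod_Suc)

lemma regular_complete_graph: "regular (complete_graph r) (r - 1)"
  unfolding regular_def
proof
  fix i assume "i \<in> verts (complete_graph r)"
  then have i: "i < r" by simp
  have "{e \<in> edges (complete_graph r). i \<in> e} = (\<lambda>j. {i, j}) ` ({0..<r} - {i})"
    unfolding edges_complete_graph using i by (auto simp: doubleton_eq_iff) blast
  moreover have "inj_on (\<lambda>j. {i, j}) ({0..<r} - {i})"
    by (rule inj_onI) (auto simp: doubleton_eq_iff)
  ultimately show "degree (complete_graph r) i = r - 1"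
    unfolding degree_def using i by (simp add: card_image)
qed

lemma regular_cycle_graph:
  assumes "3 \<le> s" shows "regular (cycle_graph s) 2"
  unfolding regular_def
proof
  fix i assume "i \<in> verts (cycle_graph s)"
  then have i: "i < s" by simp
  let ?pred = "(i + (s - 1)) mod s"
  have pred: "j = ?pred \<longleftrightarrow> Suc j mod s = i" if "j < s" for j
    using that i assms by (auto simp: mod_Suc mod_if)
  have "{e \<in> edges (cycle_graph s). i \<in> e} = {{i, Suc i mod s}, {?pred, i}}"
  proof (intro equalityI subsetI)
    fix e assume "e \<in> {e \<in> edges (cycle_graph s). i \<in> e}"
    then obtain j where j: "j < s" "e = {j, Suc j mod s}" "i \<in> e"
      unfolding edges_cycle_graph by auto
    then consider "i = j" | "Suc j mod s = i" by auto
    then show "e \<in> {{i, Suc i mod s}, {?pred, i}}"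
    proof cases
      case 2
      then have "j = ?pred" using pred[OF j(1)] by simp
      then show ?thesis using j(2) 2 by simp
    qed (use j in simp)
  next
    have "?pred < s" using assms by simp
    then have "Suc ?pred mod s = i" using pred by blast
    then show "e \<in> {e \<in> edges (cycle_graph s). i \<in> e}" if "e \<in> {{i, Suc i mod s}, {?pred, i}}" for e
      using that i unfolding edges_cycle_graph by auto
  qed
  moreover have "Suc i mod s \<noteq> ?pred" "Suc i mod s \<noteq> i"
    using i assms by (auto simp: mod_Suc mod_if)
  ultimately show "degree (cycle_graph s) i = 2"
    unfolding degree_def by (auto simp: doubleton_eq_iff)
qed

section \<open>A book embedding of the product of a complete graph and a cycle\<close>

definition page_compatible :: "('a \<Rightarrow> nat) \<Rightarrow> ('a set \<Rightarrow> nat) \<Rightarrow> 'a set \<Rightarrow> 'a set \<Rightarrow> bool" where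
  "page_compatible pos page e f \<longleftrightarrow>
     page e = page f \<longrightarrow> \<not> crossing pos e f \<and> \<not> crossing pos f e \<and> (e \<noteq> f \<longrightarrow> e \<inter> f = {})"

lemma page_compatible_sym: "page_compatible pos page e f \<longleftrightarrow> page_compatible pos page f e"
  unfolding page_compatible_def by auto

lemma matching_book_embeddingI:
  assumes "inj_on pos (verts G)" "\<And>e. e \<in> edges G \<Longrightarrow> page e < k"
    and "\<And>e f. e \<in> edges G \<Longrightarrow> f \<in> edges G \<Longrightarrow> page_compatible pos page e f"
  shows "matching_book_embedding G k pos page"
  using assms unfolding matching_book_embedding_def page_compatible_def by blast

lemma crossing_one_endpoint_between:
  assumes "crossing pos {u, v} {x, y} \<or> crossing pos {x, y} {u, v}"
  shows "(pos u < pos x \<and> pos x < pos v \<or> pos v < pos x \<and> pos x < pos u)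
     \<longleftrightarrow> \<not> (pos u < pos y \<and> pos y < pos v \<or> pos v < pos y \<and> pos y < pos u)"
  using assms unfolding crossing_def by (auto simp: doubleton_eq_iff)

lemma not_crossing_self: "\<not> crossing pos e e"
  unfolding crossing_def by (auto simp: doubleton_eq_iff)

lemma eq_if_mod_eq_dist_less:
  fixes i j q :: nat
  assumes "i mod q = j mod q" "i < j + q" "j < i + q"
  shows "i = j"
proof -
  have "i = j" if eq: "i mod q = j mod q" and le: "j \<le> i" and lt: "i < j + q" for i j
  proof -
    obtain s where s: "i = j + q * s" using mod_eq_nat1E[OF eq le] .
    then have "s = 0" using lt by (cases s) auto
    then show ?thesis using s by simp
  qed
  from this[of i j] this[of j i] assms show ?thesis by (metis nat_le_linear)
qed

lemma equal_sum_chords: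
  fixes a b c d M :: nat
  assumes "a < b" "b < M" "c < d" "d < M" "(a + b) mod M = (c + d) mod M"
  shows "b \<noteq> c" "a = c \<longleftrightarrow> b = d" "\<not> (a < c \<and> c < b \<and> b < d)"
  using eq_if_mod_eq_dist_less[OF assms(5)] assms(1-4) by auto

lemma mult_add_less_mult_add_iff:
  fixes q r q' r' K :: nat
  assumes "r < K" "r' < K"
  shows "q * K + r < q' * K + r' \<longleftrightarrow> q < q' \<or> q = q' \<and> r < r'"
proof -
  have "q * K + r < q' * K + r'" if "r < K" "q < q'" for q r q' r'
  proof -
    have "q * K + r < Suc q * K" using that by simp
    also have "\<dots> \<le> q' * K" using that by (intro mult_le_mono1) simp
    finally show ?thesis by simp
  qed
  from this[of r q q' r'] this[of r' q' q r] assms show ?thesis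
    by (cases q q' rule: linorder_cases) auto
qed

lemma edges_complete_cycle_cases:
  assumes "e \<in> edges (complete_graph (2*n+1) \<box> cycle_graph (2*m+1))"
  obtains (layer) a b j where "a < b" "b < 2*n+1" "j < 2*m+1" "e = {(a, j), (b, j)}"
    | (step) a j where "a < 2*n+1" "j < 2*m" "e = {(a, j), (a, Suc j)}"
    | (wrap) a where "a < 2*n+1" "e = {(a, 2*m), (a, 0)}"
  using assms
proof (cases rule: edges_cart_prodE)
  case (fibre a f)
  then obtain j where j: "j < 2*m+1" "e = {(a, j), (a, Suc j mod (2*m+1))}"
    unfolding edges_cycle_graph by auto
  show thesis
  proof (cases "j < 2*m")
    case True
    then show thesis using step fibre j by simp
  next
    case False
    then have "j = 2*m" using j(1) by simp
    then show thesis using wrap fibre j by simp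
  qed
next
  case (layer f j)
  then obtain a b where "a < 2*n+1" "b < 2*n+1" "a \<noteq> b" "e = {(a, j), (b, j)}"
    unfolding edges_complete_graph by auto
  then show thesis using that(1)[of a b j] that(1)[of b a j] layer
    by (cases "a < b") (auto simp: insert_commute)
qed

text \<open>The layers are placed one after another along the spine, the odd ones in
  reverse order, so that the step edges between two consecutive layers are nested.\<close>
definition spine_pos :: "nat \<Rightarrow> nat \<times> nat \<Rightarrow> nat" where
  "spine_pos n v = snd v * (2*n+1) + (if even (snd v) then fst v else 2*n - fst v)"

lemma spine_pos_less_iff:
  assumes "a < 2*n+1" "b < 2*n+1"
  shows "spine_pos n (a, j) < spine_pos n (b, j') \<longleftrightarrow>
           j < j' \<or> j = j' \<and> (if even j then a < b else b < a)"
  unfolding spine_pos_def using assms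
  by (subst mult_add_less_mult_add_iff) (auto split: if_splits)

lemma spine_pos_between_iff:
  assumes "a < 2*n+1" "b < 2*n+1" "c < 2*n+1"
  shows "(spine_pos n (a, j) < spine_pos n (c, j) \<and> spine_pos n (c, j) < spine_pos n (b, j) \<or>
          spine_pos n (b, j) < spine_pos n (c, j) \<and> spine_pos n (c, j) < spine_pos n (a, j))
     \<longleftrightarrow> a < c \<and> c < b \<or> b < c \<and> c < a"
  using assms by (auto simp: spine_pos_less_iff)

lemma inj_on_spine_pos: "inj_on (spine_pos n) ({0..<2*n+1} \<times> B)"
proof (rule inj_onI, rule ccontr)
  fix x y assume "x \<in> {0..<2*n+1} \<times> B" "y \<in> {0..<2*n+1} \<times> B" "spine_pos n x = spine_pos n y" "x \<noteq> y"
  then show False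
    using spine_pos_less_iff[of "fst x" n "fst y" "snd x" "snd y"]
      spine_pos_less_iff[of "fst y" n "fst x" "snd y" "snd x"]
    by (cases x, cases y) (auto split: if_splits)
qed

definition layer_modulus :: "nat \<Rightarrow> nat \<Rightarrow> nat \<Rightarrow> nat" where
  "layer_modulus n m j = (if j = 0 \<or> j = 2*m then 2*n+2 else 2*n+1)"

text \<open>The chords of layer j are sorted into classes by their endpoint sum modulo
  layer_modulus n m j; each class is a non-crossing matching. In the two end layers,
  class c - 1 shares its page with the wrap edge at vertex c, and class 2n is moved to
  the step page of the parity not used next to that layer.\<close>
definition layer_page :: "nat \<Rightarrow> nat \<Rightarrow> nat \<Rightarrow> nat \<Rightarrow> nat" where
  "layer_page n m j s =
     (let c = s mod layer_modulus n m j in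
      if j \<noteq> 0 \<and> j \<noteq> 2*m then c
      else if c = 2*n then (if j = 0 then 2*n+2 else 2*n+1)
      else if c = 2*n+1 then 2*n else c)"

definition step_page :: "nat \<Rightarrow> nat \<Rightarrow> nat" where
  "step_page n j = (if even j then 2*n+1 else 2*n+2)"

definition wrap_page :: "nat \<Rightarrow> nat \<Rightarrow> nat" where
  "wrap_page n a = (a + 2*n) mod (2*n+1)"

definition book_page :: "nat \<Rightarrow> nat \<Rightarrow> (nat \<times> nat) set \<Rightarrow> nat" where
  "book_page n m e =
     (let J = snd ` e in
      if card J = 1 then layer_page n m (Min J) (\<Sum>(fst ` e))
      else if Max J = Min J + 1 then step_page n (Min J)
      else wrap_page n (Min (fst ` e)))"

lemma book_page_layer: "a \<noteq> b \<Longrightarrow> book_page n m {(a, j), (b, j)} = layer_page n m j (a + b)"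
  unfolding book_page_def by (simp add: Let_def)

lemma book_page_step: "book_page n m {(a, j), (a, Suc j)} = step_page n j"
  unfolding book_page_def by (simp add: Let_def)

lemma book_page_wrap: "1 \<le> m \<Longrightarrow> book_page n m {(a, 2*m), (a, 0)} = wrap_page n a"
  unfolding book_page_def by (simp add: Let_def)

lemma layer_page_less: "layer_page n m j s < 2*n+3"
  unfolding layer_page_def layer_modulus_def Let_def
  using mod_less_divisor[of "2*n+2" s] mod_less_divisor[of "2*n+1" s]
  by (auto simp del: mod_less_divisor)

lemma layer_page_eqD:
  assumes "layer_page n m j s = layer_page n m j t"
  shows "s mod layer_modulus n m j = t mod layer_modulus n m j"
  using assms unfolding layer_page_def layer_modulus_def Let_def
  using mod_less_divisor[of "2*n+2" s] mod_less_divisor[of "2*n+2" t]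
  by (auto split: if_splits simp del: mod_less_divisor)

lemma layer_page_eq_step_page:
  assumes "layer_page n m j s = step_page n j'"
  shows "j = 0 \<and> odd j' \<or> j = 2*m \<and> even j'"
  using assms unfolding layer_page_def layer_modulus_def step_page_def Let_def
  using mod_less_divisor[of "2*n+2" s] mod_less_divisor[of "2*n+1" s]
  by (auto split: if_splits simp del: mod_less_divisor)

lemma layer_page_eq_wrap_page:
  assumes "j = 0 \<or> j = 2*m" "c < 2*n+1" "layer_page n m j s = wrap_page n c"
  shows "s mod (2*n+2) = (c + (2*n+1)) mod (2*n+2)"
proof (cases "c = 0")
  case True
  then show ?thesis using assms unfolding layer_page_def layer_modulus_def wrap_page_def Let_def
    by (auto split: if_splits)
next
  case False
  then have "wrap_page n c = c - 1" "(c + (2*n+1)) mod (2*n+2) = c - 1"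
    using assms(2) unfolding wrap_page_def by (simp_all add: mod_if)
  then show ?thesis using assms unfolding layer_page_def layer_modulus_def Let_def
    by (auto split: if_splits)
qed

lemma compatible_layer_layer:
  assumes "a < b" "b < 2*n+1" "c < d" "d < 2*n+1"
  shows "page_compatible (spine_pos n) (book_page n m) {(a, j), (b, j)} {(c, j'), (d, j')}"
  unfolding page_compatible_def book_page_layer[OF less_imp_neq[OF assms(1)]]
    book_page_layer[OF less_imp_neq[OF assms(3)]]
proof (intro impI)
  let ?e = "{(a, j), (b, j)}" and ?f = "{(c, j'), (d, j')}"
  assume same_page: "layer_page n m j (a + b) = layer_page n m j' (c + d)"
  show "\<not> crossing (spine_pos n) ?e ?f \<and> \<not> crossing (spine_pos n) ?f ?e \<and> (?e \<noteq> ?f \<longrightarrow> ?e \<inter> ?f = {})"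
  proof (cases "j = j'")
    case False
    then show ?thesis
      using crossing_one_endpoint_between[of "spine_pos n" "(a, j)" "(b, j)" "(c, j')" "(d, j')"] assms
      by (auto simp: spine_pos_less_iff)
  next
    case True
    let ?M = "layer_modulus n m j"
    have "2*n+1 \<le> ?M" unfolding layer_modulus_def by simp
    moreover have "(a + b) mod ?M = (c + d) mod ?M" using layer_page_eqD[OF same_page[folded True]] .
    ultimately have chords: "b \<noteq> c" "d \<noteq> a" "a = c \<longleftrightarrow> b = d"
        "\<not> (a < c \<and> c < b \<and> b < d)" "\<not> (c < a \<and> a < d \<and> d < b)"
      using equal_sum_chords[of a b ?M c d] equal_sum_chords[of c d ?M a b] assms by auto
    have bounds: "a < 2*n+1" "c < 2*n+1" using assms by linarith+
    have "\<not> (crossing (spine_pos n) ?e ?f \<or> crossing (spine_pos n) ?f ?e)"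
    proof
      assume "crossing (spine_pos n) ?e ?f \<or> crossing (spine_pos n) ?f ?e"
      from crossing_one_endpoint_between[OF this] have "(a < c \<and> c < b) \<longleftrightarrow> \<not> (a < d \<and> d < b)"
        unfolding True[symmetric] spine_pos_between_iff[OF bounds(1) assms(2) bounds(2)]
          spine_pos_between_iff[OF bounds(1) assms(2,4)] using assms(1) by auto
      then show False using chords assms(1,3) by linarith
    qed
    moreover have "?e \<inter> ?f = {}" if "?e \<noteq> ?f" using that chords True by auto
    ultimately show ?thesis by blast
  qed
qed

lemma compatible_layer_step:
  assumes "a < b" "b < 2*n+1" "c < 2*n+1" "j' < 2*m"
  shows "page_compatible (spine_pos n) (book_page n m) {(a, j), (b, j)} {(c, j'), (c, Suc j')}"
  unfolding page_compatible_def book_page_layer[OF less_imp_neq[OF assms(1)]] book_page_step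
proof (intro impI)
  assume "layer_page n m j (a + b) = step_page n j'"
  then have "j = 0 \<and> 0 < j' \<or> j = 2*m \<and> Suc j' < 2*m"
    using layer_page_eq_step_page assms(4) by (metis Suc_lessI dvd_triv_left even_Suc gr0I odd_pos)
  then show "\<not> crossing (spine_pos n) {(a, j), (b, j)} {(c, j'), (c, Suc j')}
      \<and> \<not> crossing (spine_pos n) {(c, j'), (c, Suc j')} {(a, j), (b, j)}
      \<and> ({(a, j), (b, j)} \<noteq> {(c, j'), (c, Suc j')} \<longrightarrow> {(a, j), (b, j)} \<inter> {(c, j'), (c, Suc j')} = {})"
    using crossing_one_endpoint_between[of "spine_pos n" "(a, j)" "(b, j)" "(c, j')" "(c, Suc j')"] assms
    by (auto simp: spine_pos_less_iff)
qed

lemma compatible_layer_wrap: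
  assumes "1 \<le> m" "a < b" "b < 2*n+1" "c < 2*n+1" "j < 2*m+1"
  shows "page_compatible (spine_pos n) (book_page n m) {(a, j), (b, j)} {(c, 2*m), (c, 0)}"
  unfolding page_compatible_def book_page_layer[OF less_imp_neq[OF assms(2)]] book_page_wrap[OF assms(1)]
proof (intro impI)
  let ?e = "{(a, j), (b, j)}" and ?f = "{(c, 2*m), (c, 0)}"
  assume same_page: "layer_page n m j (a + b) = wrap_page n c"
  show "\<not> crossing (spine_pos n) ?e ?f \<and> \<not> crossing (spine_pos n) ?f ?e \<and> (?e \<noteq> ?f \<longrightarrow> ?e \<inter> ?f = {})"
  proof (cases "j = 0 \<or> j = 2*m")
    case False
    then show ?thesis
      using crossing_one_endpoint_between[of "spine_pos n" "(a, j)" "(b, j)" "(c, 2*m)" "(c, 0)"] assms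
      by (auto simp: spine_pos_less_iff)
  next
    case True
    text \<open>The wrap edge at c acts as the chord from c to a virtual vertex 2n + 1.\<close>
    have "(a + b) mod (2*n+2) = (c + (2*n+1)) mod (2*n+2)"
      using layer_page_eq_wrap_page[OF True assms(4) same_page] .
    then have "b \<noteq> c" "a \<noteq> c" "\<not> (a < c \<and> c < b)"
      using equal_sum_chords[of a b "2*n+2" c "2*n+1"] assms by auto
    then show ?thesis
      using crossing_one_endpoint_between[of "spine_pos n" "(a, j)" "(b, j)" "(c, 2*m)" "(c, 0)"] assms True
      by (auto simp: spine_pos_less_iff)
  qed
qed

lemma compatible_step_step:
  assumes "a < 2*n+1" "c < 2*n+1"
  shows "page_compatible (spine_pos n) (book_page n m) {(a, j), (a, Suc j)} {(c, j'), (c, Suc j')}"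
  unfolding page_compatible_def book_page_step
proof (intro impI)
  let ?e = "{(a, j), (a, Suc j)}" and ?f = "{(c, j'), (c, Suc j')}"
  assume "step_page n j = step_page n j'"
  then have "j = j' \<or> Suc j < j' \<or> Suc j' < j"
    unfolding step_page_def by (auto split: if_splits) presburger+
  then show "\<not> crossing (spine_pos n) ?e ?f \<and> \<not> crossing (spine_pos n) ?f ?e \<and> (?e \<noteq> ?f \<longrightarrow> ?e \<inter> ?f = {})"
    using crossing_one_endpoint_between[of "spine_pos n" "(a, j)" "(a, Suc j)" "(c, j')" "(c, Suc j')"] assms
    by (auto simp: spine_pos_less_iff split: if_splits)
qed

lemma compatible_step_wrap:
  assumes "1 \<le> m"
  shows "page_compatible (spine_pos n) (book_page n m) {(a, j), (a, Suc j)} {(c, 2*m), (c, 0)}"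
proof -
  have "wrap_page n c < 2*n+1" unfolding wrap_page_def by simp
  then have "wrap_page n c < step_page n j" unfolding step_page_def by simp
  then show ?thesis unfolding page_compatible_def book_page_step book_page_wrap[OF assms] by simp
qed

lemma compatible_wrap_wrap:
  assumes "1 \<le> m" "a < 2*n+1" "c < 2*n+1"
  shows "page_compatible (spine_pos n) (book_page n m) {(a, 2*m), (a, 0)} {(c, 2*m), (c, 0)}"
proof -
  have "a = c" if "wrap_page n a = wrap_page n c"
    using that eq_if_mod_eq_dist_less[of "a + 2*n" "2*n+1" "c + 2*n"] assms
    unfolding wrap_page_def by simp
  then show ?thesis
    unfolding page_compatible_def book_page_wrap[OF assms(1)] using not_crossing_self by auto
qed

lemma book_embedding_complete_cycle:
  assumes "1 \<le> m"
  shows "matching_book_embedding (complete_graph (2*n+1) \<box> cycle_graph (2*m+1))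
           (2*n+3) (spine_pos n) (book_page n m)"
proof (rule matching_book_embeddingI)
  let ?G = "complete_graph (2*n+1) \<box> cycle_graph (2*m+1)"
  show "inj_on (spine_pos n) (verts ?G)"
    unfolding verts_cart_prod verts_complete_graph by (rule inj_on_spine_pos)
  show "book_page n m e < 2*n+3" if "e \<in> edges ?G" for e
    using that
  proof (cases rule: edges_complete_cycle_cases)
    case (wrap a)
    have "wrap_page n a < 2*n+1" unfolding wrap_page_def by simp
    then show ?thesis using wrap assms by (simp add: book_page_wrap)
  qed (simp_all add: book_page_layer layer_page_less book_page_step step_page_def)
  show "page_compatible (spine_pos n) (book_page n m) e f" if "e \<in> edges ?G" "f \<in> edges ?G" for e f
    using that(1)
  proof (cases rule: edges_complete_cycle_cases)
    case (layer a b j)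
    from that(2) show ?thesis
    proof (cases rule: edges_complete_cycle_cases)
    qed (use layer assms in \<open>simp_all add: compatible_layer_layer compatible_layer_step compatible_layer_wrap\<close>)
  next
    case (step a j)
    from that(2) show ?thesis
    proof (cases rule: edges_complete_cycle_cases)
      case (layer c d j')
      then show ?thesis
        using compatible_layer_step step by (subst page_compatible_sym) simp
    qed (use step assms in \<open>simp_all add: compatible_step_step compatible_step_wrap\<close>)
  next
    case (wrap a)
    from that(2) show ?thesis
    proof (cases rule: edges_complete_cycle_cases)
      case (layer c d j')
      then show ?thesis
        using compatible_layer_wrap assms wrap by (subst page_compatible_sym) simp
    next
      case (step c j')
      then show ?thesis
        using compatible_step_wrap assms wrap by (subst page_compatible_sym) simp
    qed (use wrap assms in \<open>simp add: compatible_wrap_wrap\<close>)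
  qed
qed

theorem lemma2p3:
  fixes n m :: nat
  assumes "n \<ge> 2" and "m \<ge> 1"
  shows "mbt (complete_graph (2*n+1) \<box> cycle_graph (2*m+1))
           = max_degree (complete_graph (2*n+1) \<box> cycle_graph (2*m+1)) + 1
       \<and> max_degree (complete_graph (2*n+1) \<box> cycle_graph (2*m+1)) + 1 = 2*n+3"
proof -
  let ?G = "complete_graph (2*n+1) \<box> cycle_graph (2*m+1)"
  have cycle: "simple_graph (cycle_graph (2*m+1))" "regular (cycle_graph (2*m+1)) 2"
    using simple_graph_cycle_graph regular_cycle_graph assms(2) by simp_all
  have simple: "simple_graph ?G"
    using simple_graph_cart_prod[OF simple_graph_complete_graph cycle(1)] .
  have regular: "regular ?G (2*n+2)"
    using regular_cart_prod[OF simple_graph_complete_graph cycle(1) regular_complete_graph[of "2*n+1"] cycle(2)]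
    by simp
  have "matching_book_embedding ?G (2*n+2 + 1) (spine_pos n) (book_page n m)"
    using book_embedding_complete_cycle[OF assms(2), of n] by (simp add: numeral_3_eq_3)
  then have "mbt ?G = 2*n+3"
    using mbt_eq_regular_odd[OF simple regular] by simp
  moreover have "max_degree ?G = 2*n+2"
    using max_degree_regular[OF regular] by simp
  ultimately show ?thesis by simp
qed

end
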